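(* Let $w_1,w_2,w_3\in(-\infty,1)\setminus\{0\}$, $n_j=\tfrac12(1-\sqrt{1-w_j})$, and for $\lambda\in\mathbb{S}^1$ let $\nu(\lambda)=(\nu_{w_1}(\lambda),\nu_{w_2}(\lambda),\nu_{w_3}(\lambda))$ with $\nu_w(\lambda)=\frac12-\frac12\sqrt{1+\frac{w(\lambda-1)^2}{4\lambda}}$ (nonnegative square root). Then $\nu(\lambda)\in T$ for all $\lambda\in\mathbb{S}^1$ if and only if \[ |n_1|+|n_2|+|n_3|\le 1,\quad |n_i|\le|n_j|+|n_k|,\quad |w_i|\le|w_j|+|w_k|\quad\text{for all }\{i,j,k\}=\{1,2,3\}. \]
   Context: $T_0\subset\mathbb{R}^3$ is the closed tetrahedron $\{(\nu_1,\nu_2,\nu_3):\nu_1+\nu_2+\nu_3\le1,\ \nu_i\le\nu_j+\nu_k\ \forall\{i,j,k\}=\{1,2,3\}\}$, and $T$ is the orbit of $T_0$ under the group of transformations of $\mathbb{R}^3$ generated by the maps $\nu_k\mapsto\nu_k+1$ and $\nu_k\mapsto-\nu_k$ ($k=1,2,3$, acting on one coordinate at a time). For $\lambda=e^{i\theta}$, $\frac{(\lambda-1)^2}{4\lambda}=-\sin^2(\theta/2)$. *)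

theory Defs
  imports Complex_Main
begin

definition T0 :: "(real \<times> real \<times> real) set" where
  "T0 = {(a, b, c). a + b + c \<le> 1 \<and> a \<le> b + c \<and> b \<le> a + c \<and> c \<le> a + b}"

text \<open>T: the orbit of T0 under the group generated by the coordinate maps
  x_k |-> x_k + 1 and x_k |-> - x_k (k = 1,2,3).  The orbit under a group is the
  smallest set containing T0 closed under the generators and their inverses.\<close>
inductive_set T :: "(real \<times> real \<times> real) set" where
  base: "p \<in> T0 \<Longrightarrow> p \<in> T"
| shift1: "(a, b, c) \<in> T \<Longrightarrow> (a + 1, b, c) \<in> T"
| shift1_inv: "(a, b, c) \<in> T \<Longrightarrow> (a - 1, b, c) \<in> T"
| neg1: "(a, b, c) \<in> T \<Longrightarrow> (- a, b, c) \<in> T"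
| shift2: "(a, b, c) \<in> T \<Longrightarrow> (a, b + 1, c) \<in> T"
| shift2_inv: "(a, b, c) \<in> T \<Longrightarrow> (a, b - 1, c) \<in> T"
| neg2: "(a, b, c) \<in> T \<Longrightarrow> (a, - b, c) \<in> T"
| shift3: "(a, b, c) \<in> T \<Longrightarrow> (a, b, c + 1) \<in> T"
| shift3_inv: "(a, b, c) \<in> T \<Longrightarrow> (a, b, c - 1) \<in> T"
| neg3: "(a, b, c) \<in> T \<Longrightarrow> (a, b, - c) \<in> T"

text \<open>nu_w(lambda) = 1/2 - 1/2 sqrt(1 + w (lambda-1)^2/(4 lambda)), principal square root
  (for |lambda| = 1 and w < 1 the radicand is a nonnegative real, so this is the
  nonnegative real square root).\<close>
definition nu :: "real \<Rightarrow> complex \<Rightarrow> complex" where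
  "nu w l = 1/2 - 1/2 * csqrt (1 + complex_of_real w * (l - 1)^2 / (4 * l))"

definition nn :: "real \<Rightarrow> real" where
  "nn w = 1/2 * (1 - sqrt (1 - w))"

definition embC :: "real \<times> real \<times> real \<Rightarrow> complex \<times> complex \<times> complex" where
  "embC p = (case p of (a, b, c) \<Rightarrow> (complex_of_real a, complex_of_real b, complex_of_real c))"

end

theory Submission
  imports Defs "HOL-Analysis.Convex"
begin

(* Put s = sin^2(theta/2) = (1 - Re lambda)/2 in [0,1]. Then nu_w(lambda) = n_{w s}, so the
   condition says that the path s |-> (n_{w1 s}, n_{w2 s}, n_{w3 s}) stays in T. Since the
   distances of the coordinates to the nearest integers are invariant under the group, inside the
   cube |x_i| <= 1/2 the set T consists of the points whose absolute values lie in T0.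

   Sufficiency: |n_{w s}| <= |n_w|, and the triangle inequalities propagate from s = 1 to all s.
   For w1 <= 0 this uses the subadditivity of x |-> sqrt (1 + x) - 1 together with
   |w1| <= |w2| + |w3|; for w1 >= 0 one writes n_{w s} in terms of n_w through the convex
   function t |-> sqrt (1 - s + s t^2) and uses |n1| <= |n2| + |n3|.

   Necessity: since n_{w s} ~ w s / 4 as s -> 0, dividing the triangle inequalities by s and
   letting s -> 0 gives |w1| <= |w2| + |w3|. If the smallest w1 were < -3, then at
   s = -3 / w1 the first coordinate would be -1/2, forcing |n_{w2 s}| + |n_{w3 s}| = 1/2; by
   |x| <= 4 |n_x| (1 + |n_x|) this gives |w2 s| + |w3 s| < 3 = |w1 s|, a contradiction. So all
   w_j >= -3, i.e. |n_{w_j}| <= 1/2, and the point s = 1 yields the conditions on the n_j. *)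

definition int_dist :: "real \<Rightarrow> real" where
  "int_dist x = min (frac x) (1 - frac x)"

lemma int_dist_add_1 [simp]: "int_dist (x + 1) = int_dist x"
  by (simp add: int_dist_def frac_1_eq)

lemma int_dist_diff_1 [simp]: "int_dist (x - 1) = int_dist x"
  by (metis diff_add_cancel int_dist_add_1)

lemma int_dist_minus [simp]: "int_dist (- x) = int_dist x"
proof (cases "x \<in> \<int>")
  case True
  then have "frac x = 0" by simp
  with True show ?thesis by (simp add: int_dist_def frac_neg del: frac_eq_0_iff)
qed (auto simp: int_dist_def frac_neg min.commute)

lemma int_dist_eq_abs: assumes "\<bar>x\<bar> \<le> 1/2" shows "int_dist x = \<bar>x\<bar>"
proof (cases "x \<ge> 0")
  case True
  then have "frac x = x" using assms by (simp add: frac_eq)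
  then show ?thesis using True assms by (simp add: int_dist_def)
next
  case False
  then have "frac (x + 1) = x + 1" using assms by (subst frac_eq) auto
  then have "frac x = x + 1" by (simp add: frac_1_eq)
  then show ?thesis using False assms by (simp add: int_dist_def)
qed

lemma int_dist_mem_T0_of_mem_T:
  "p \<in> T \<Longrightarrow> (case p of (a, b, c) \<Rightarrow> (int_dist a, int_dist b, int_dist c) \<in> T0)"
proof (induction rule: T.induct)
  case (base p)
  then obtain a b c where "p = (a, b, c)" "(a, b, c) \<in> T0" by (cases p) auto
  moreover from this have "\<bar>a\<bar> \<le> 1/2" "\<bar>b\<bar> \<le> 1/2" "\<bar>c\<bar> \<le> 1/2" by (auto simp: T0_def)
  ultimately show ?case by (auto simp: int_dist_eq_abs T0_def)
qed simp_all

lemma mem_T_of_abs_mem_T0: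
  assumes "(\<bar>a\<bar>, \<bar>b\<bar>, \<bar>c\<bar>) \<in> T0" shows "(a, b, c) \<in> T"
proof -
  have "(\<bar>a\<bar>, \<bar>b\<bar>, \<bar>c\<bar>) \<in> T" using assms by (rule T.base)
  then have "(a, \<bar>b\<bar>, \<bar>c\<bar>) \<in> T" using T.neg1 by (cases "a \<ge> 0") fastforce+
  then have "(a, b, \<bar>c\<bar>) \<in> T" using T.neg2 by (cases "b \<ge> 0") fastforce+
  then show ?thesis using T.neg3 by (cases "c \<ge> 0") fastforce+
qed

lemma mem_T_iff_abs_mem_T0:
  assumes "\<bar>a\<bar> \<le> 1/2" "\<bar>b\<bar> \<le> 1/2" "\<bar>c\<bar> \<le> 1/2"
  shows "(a, b, c) \<in> T \<longleftrightarrow> (\<bar>a\<bar>, \<bar>b\<bar>, \<bar>c\<bar>) \<in> T0"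
  using int_dist_mem_T0_of_mem_T[of "(a, b, c)"] mem_T_of_abs_mem_T0[of a b c] assms
  by (auto simp: int_dist_eq_abs)

lemma T_swap12: "p \<in> T \<Longrightarrow> (case p of (a, b, c) \<Rightarrow> (b, a, c)) \<in> T"
  by (induction rule: T.induct) (auto simp: T0_def intro: T.intros)

lemma T_rotate: "p \<in> T \<Longrightarrow> (case p of (a, b, c) \<Rightarrow> (c, a, b)) \<in> T"
  by (induction rule: T.induct) (auto simp: T0_def intro: T.intros)

lemma nn_0 [simp]: "nn 0 = 0"
  by (simp add: nn_def)

lemma nn_mono: "x \<le> y \<Longrightarrow> nn x \<le> nn y"
  by (simp add: nn_def)

lemma nn_eq_div: assumes "x \<le> 1" shows "nn x = x / (2 * (1 + sqrt (1 - x)))"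
proof -
  have "(1 - sqrt (1 - x)) * (1 + sqrt (1 - x)) = x"
    using assms by (simp add: algebra_simps)
  moreover have "0 < 1 + sqrt (1 - x)" using assms by (simp add: add_pos_nonneg)
  ultimately show ?thesis by (simp add: nn_def field_simps)
qed

lemma nn_eq_0_iff: "nn x = 0 \<longleftrightarrow> x = 0"
  by (simp add: nn_def)

lemma eq_four_nn_mult: assumes "x \<le> 1" shows "x = 4 * nn x * (1 - nn x)"
proof -
  define r where "r = sqrt (1 - x)"
  have "r * r = 1 - x" using assms by (simp add: r_def)
  then show ?thesis unfolding nn_def r_def[symmetric] by (simp add: field_simps)
qed

lemma abs_nn_le_half: "-3 \<le> x \<Longrightarrow> x \<le> 1 \<Longrightarrow> \<bar>nn x\<bar> \<le> 1/2"
  by (simp add: nn_def abs_le_iff real_sqrt_le_iff[of _ 4, simplified])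

lemma abs_nn_mult_le: assumes "w \<le> 1" "0 \<le> s" "s \<le> 1" shows "\<bar>nn (w * s)\<bar> \<le> \<bar>nn w\<bar>"
proof (cases "w \<ge> 0")
  case True
  then have "0 \<le> w * s" "w * s \<le> w" using assms by (auto intro: mult_left_le)
  then show ?thesis using nn_mono[of 0 "w * s"] nn_mono[of "w * s" w] by simp
next
  case False
  then have "w * s \<le> 0" "w \<le> w * s"
    using assms by (auto simp: mult_nonpos_nonneg intro: mult_left_mono_neg[of s 1, simplified])
  then show ?thesis using nn_mono[of "w * s" 0] nn_mono[of w "w * s"] by simp
qed

lemma nu_eq_nn_mult:
  assumes "norm l = 1" "w \<le> 1"
  shows "nu w l = of_real (nn (w * ((1 - Re l) / 2)))"
proof -
  define s where "s = (1 - Re l) / 2"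
  have "l \<noteq> 0" using assms by auto
  moreover have "l * cnj l = 1" using complex_norm_square[of l] assms by simp
  ultimately have "(l - 1)^2 / (4 * l) = (l + cnj l - 2) / 4"
    by (simp add: field_simps power2_eq_square)
  also have "\<dots> = - of_real s" by (simp add: s_def complex_eq_iff) (simp add: field_simps)
  finally have e: "(l - 1)^2 / (4 * l) = - of_real s" .
  have "\<bar>Re l\<bar> \<le> 1" using abs_Re_le_cmod[of l] assms by simp
  then have "w * s \<le> 1" using assms by (intro mult_le_one) (auto simp: s_def)
  have "1 + of_real w * (l - 1)^2 / (4 * l) = 1 + of_real w * ((l - 1)^2 / (4 * l))"
    by simp
  also have "\<dots> = of_real (1 - w * s)" unfolding e by simp
  finally have radicand: "1 + of_real w * (l - 1)^2 / (4 * l) = of_real (1 - w * s)" .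
  have "nu w l = 1/2 - 1/2 * csqrt (of_real (1 - w * s))" unfolding nu_def radicand ..
  also have "\<dots> = 1/2 - 1/2 * of_real (sqrt (1 - w * s))"
    using \<open>w * s \<le> 1\<close> by (subst of_real_sqrt) simp_all
  also have "\<dots> = of_real (nn (w * s))"
    by (simp add: nn_def)
  finally show ?thesis unfolding s_def .
qed

lemma image_unit_circle_half_one_minus_Re:
  "(\<lambda>l::complex. (1 - Re l) / 2) ` {l. norm l = 1} = {0..1}"
proof (intro equalityI subsetI)
  fix s assume "s \<in> (\<lambda>l::complex. (1 - Re l) / 2) ` {l. norm l = 1}"
  then obtain l :: complex where "norm l = 1" "s = (1 - Re l) / 2" by blast
  moreover have "\<bar>Re l\<bar> \<le> norm l" by (rule abs_Re_le_cmod)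
  ultimately show "s \<in> {0..1}" by (simp add: abs_le_iff)
next
  fix s :: real assume "s \<in> {0..1}"
  then have "(1 - 2 * s)^2 \<le> 1" by (simp add: abs_square_le_1 abs_le_iff)
  then have "norm (Complex (1 - 2 * s) (sqrt (1 - (1 - 2 * s)^2))) = 1"
    by (simp add: cmod_def)
  then show "s \<in> (\<lambda>l::complex. (1 - Re l) / 2) ` {l. norm l = 1}"
    by (intro image_eqI[of _ _ "Complex (1 - 2 * s) (sqrt (1 - (1 - 2 * s)^2))"]) auto
qed

definition nu_path_in_T :: "real \<Rightarrow> real \<Rightarrow> real \<Rightarrow> bool" where
  "nu_path_in_T w1 w2 w3 \<longleftrightarrow> (\<forall>s\<in>{0..1}. (nn (w1 * s), nn (w2 * s), nn (w3 * s)) \<in> T)"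

lemma nu_circle_in_T_iff_nu_path_in_T:
  assumes "w1 \<le> 1" "w2 \<le> 1" "w3 \<le> 1"
  shows "(\<forall>l::complex. norm l = 1 \<longrightarrow> (nu w1 l, nu w2 l, nu w3 l) \<in> embC ` T)
    \<longleftrightarrow> nu_path_in_T w1 w2 w3"
proof -
  have "inj embC" by (auto simp: inj_def embC_def)
  then have embC_mem_iff: "embC p \<in> embC ` T \<longleftrightarrow> p \<in> T" for p
    by (simp add: inj_image_mem_iff)
  have "(nu w1 l, nu w2 l, nu w3 l) \<in> embC ` T \<longleftrightarrow>
      (nn (w1 * ((1 - Re l) / 2)), nn (w2 * ((1 - Re l) / 2)), nn (w3 * ((1 - Re l) / 2))) \<in> T"
    if "norm l = 1" for l
  proof -
    have "(nu w1 l, nu w2 l, nu w3 l)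
        = embC (nn (w1 * ((1 - Re l) / 2)), nn (w2 * ((1 - Re l) / 2)), nn (w3 * ((1 - Re l) / 2)))"
      using that assms by (simp add: nu_eq_nn_mult embC_def)
    then show ?thesis by (simp only: embC_mem_iff)
  qed
  then show ?thesis
    unfolding nu_path_in_T_def image_unit_circle_half_one_minus_Re[symmetric] by simp
qed

lemma nu_path_in_T_swap12: "nu_path_in_T w1 w2 w3 \<Longrightarrow> nu_path_in_T w2 w1 w3"
  unfolding nu_path_in_T_def using T_swap12 by fastforce

lemma nu_path_in_T_rotate: "nu_path_in_T w1 w2 w3 \<Longrightarrow> nu_path_in_T w3 w1 w2"
  unfolding nu_path_in_T_def using T_rotate by fastforce

lemma convex_on_sum_le_endpoints:
  fixes f :: "real \<Rightarrow> real"
  assumes "convex_on {a..b} f" "p \<in> {a..b}" "q \<in> {a..b}" "p + q = a + b"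
  shows "f p + f q \<le> f a + f b"
proof (cases "a < b")
  case True
  have "f p \<le> (f b - f a) / (b - a) * (p - a) + f a"
    using convex_onD_Icc'[OF assms(1,2)] by simp
  moreover have "f q \<le> (f b - f a) / (b - a) * (q - a) + f a"
    using convex_onD_Icc'[OF assms(1,3)] by simp
  moreover have "(f b - f a) / (b - a) * (p - a) + (f b - f a) / (b - a) * (q - a)
      = (f b - f a) / (b - a) * ((p - a) + (q - a))"
    by (simp only: distrib_left)
  moreover have "(p - a) + (q - a) = b - a" using assms(4) by linarith
  ultimately show ?thesis using True by simp
next
  case False
  with assms(2,3) have "p = a" "q = a" "b = a" by auto
  then show ?thesis by simp
qed

lemma convex_on_sqrt_affine_square:
  fixes s :: real
  assumes "0 \<le> s" "s \<le> 1"
  shows "convex_on UNIV (\<lambda>t. sqrt (1 - s + s * t^2))"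
proof (rule convex_onI)
  fix u x y :: real
  assume u: "0 < u" "u < 1"
  define c e where "c = sqrt (1 - s)" and "e = sqrt s"
  have norm_form: "sqrt (1 - s + s * t^2) = sqrt (c^2 + (e * t)^2)" for t
    using assms by (simp add: c_def e_def power_mult_distrib)
  have scale: "sqrt ((k * c)^2 + (k * e * t)^2) = k * sqrt (c^2 + (e * t)^2)" if "0 \<le> k" for k t
  proof -
    have "(k * c)^2 + (k * e * t)^2 = k^2 * (c^2 + (e * t)^2)" by (simp add: algebra_simps)
    then show ?thesis using that by (simp add: real_sqrt_mult)
  qed
  have "sqrt (1 - s + s * ((1 - u) *\<^sub>R x + u *\<^sub>R y)^2)
      = sqrt (c^2 + (e * ((1 - u) *\<^sub>R x + u *\<^sub>R y))^2)"
    by (rule norm_form)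
  also have "\<dots> = sqrt (((1 - u) * c + u * c)^2 + ((1 - u) * e * x + u * e * y)^2)"
    by (simp add: algebra_simps)
  also have "\<dots> \<le> sqrt (((1 - u) * c)^2 + ((1 - u) * e * x)^2) + sqrt ((u * c)^2 + (u * e * y)^2)"
    by (rule real_sqrt_sum_squares_triangle_ineq)
  also have "\<dots> = (1 - u) * sqrt (1 - s + s * x^2) + u * sqrt (1 - s + s * y^2)"
    using u by (simp add: scale norm_form)
  finally show "sqrt (1 - s + s * ((1 - u) *\<^sub>R x + u *\<^sub>R y)^2)
      \<le> (1 - u) * sqrt (1 - s + s * x^2) + u * sqrt (1 - s + s * y^2)" .
qed simp

definition nn_rescaled :: "real \<Rightarrow> real \<Rightarrow> real" where
  "nn_rescaled s n = (1 - sqrt (1 - s + s * (1 - 2 * n)^2)) / 2"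

lemma nn_mult_eq_nn_rescaled: assumes "w \<le> 1" shows "nn (w * s) = nn_rescaled s (nn w)"
proof -
  have "1 - 2 * nn w = sqrt (1 - w)" by (simp add: nn_def field_simps)
  then have sq: "(1 - 2 * nn w)^2 = 1 - w" using assms by simp
  have "1 - s + s * (1 - 2 * nn w)^2 = 1 - w * s" unfolding sq by (simp add: algebra_simps)
  then show ?thesis unfolding nn_rescaled_def by (simp add: nn_def)
qed

lemma nn_rescaled_0 [simp]: "nn_rescaled s 0 = 0"
  by (simp add: nn_rescaled_def)

lemma nn_rescaled_mono:
  assumes "0 \<le> s" "0 \<le> m" "m \<le> n" "n \<le> 1/2"
  shows "nn_rescaled s m \<le> nn_rescaled s n"
proof -
  have "(1 - 2 * n)^2 \<le> (1 - 2 * m)^2" using assms by (intro power_mono) auto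
  then show ?thesis using assms by (simp add: nn_rescaled_def mult_left_mono)
qed

lemma nn_rescaled_subadditive:
  assumes "0 \<le> s" "s \<le> 1" "0 \<le> m" "0 \<le> n"
  shows "nn_rescaled s (m + n) \<le> nn_rescaled s m + nn_rescaled s n"
proof -
  let ?f = "\<lambda>t. sqrt (1 - s + s * t^2)"
  have "convex_on {1 - 2 * (m + n)..1} ?f"
    using convex_on_sqrt_affine_square[OF assms(1,2)] by (rule convex_on_subset) auto
  then have "?f (1 - 2 * m) + ?f (1 - 2 * n) \<le> ?f (1 - 2 * (m + n)) + ?f 1"
    using assms by (intro convex_on_sum_le_endpoints) auto
  then show ?thesis by (simp add: nn_rescaled_def field_simps)
qed

lemma nn_rescaled_triangle:
  assumes s: "0 \<le> s" "s \<le> 1"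
    and n: "0 \<le> n1" "0 \<le> n2" "n2 \<le> 1/2" "0 \<le> n3" "n3 \<le> 1/2" "n1 \<le> n2 + n3"
  shows "nn_rescaled s n1 \<le> nn_rescaled s n2 + nn_rescaled s n3"
proof (cases "n1 \<le> n2")
  case True
  then show ?thesis using nn_rescaled_mono[of s n1 n2] nn_rescaled_mono[of s 0 n3] s n by simp
next
  case False
  have "nn_rescaled s n1 = nn_rescaled s (n2 + (n1 - n2))" by simp
  also have "\<dots> \<le> nn_rescaled s n2 + nn_rescaled s (n1 - n2)"
    using False s n by (intro nn_rescaled_subadditive) auto
  also have "\<dots> \<le> nn_rescaled s n2 + nn_rescaled s n3"
    using False s n nn_rescaled_mono[of s "n1 - n2" n3] by simp
  finally show ?thesis .
qed

lemma nn_rescaled_abs_le: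
  assumes "0 \<le> s" "s \<le> 1"
  shows "nn_rescaled s \<bar>n\<bar> \<le> \<bar>nn_rescaled s n\<bar>"
proof (cases "n \<ge> 0")
  case False
  let ?f = "\<lambda>t. sqrt (1 - s + s * t^2)"
  have "?f ((1 - 1/2) *\<^sub>R (1 + 2 * n) + (1/2) *\<^sub>R (1 - 2 * n))
      \<le> (1 - 1/2) * ?f (1 + 2 * n) + (1/2) * ?f (1 - 2 * n)"
    using convex_on_sqrt_affine_square[OF assms] by (rule convex_onD) auto
  then have "2 \<le> ?f (1 + 2 * n) + ?f (1 - 2 * n)" by (simp add: field_simps)
  moreover have "nn_rescaled s \<bar>n\<bar> = (1 - ?f (1 + 2 * n)) / 2"
    using False by (simp add: nn_rescaled_def)
  moreover have "\<bar>nn_rescaled s n\<bar> = \<bar>1 - ?f (1 - 2 * n)\<bar> / 2"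
    by (simp add: nn_rescaled_def)
  ultimately show ?thesis using abs_ge_minus_self[of "1 - ?f (1 - 2 * n)"] by argo
qed simp

lemma two_abs_nn_of_nonpos: assumes "x \<le> 0" shows "2 * \<bar>nn x\<bar> = sqrt (1 + \<bar>x\<bar>) - 1"
proof -
  have "1 \<le> sqrt (1 - x)" using assms by simp
  then show ?thesis using assms by (simp add: nn_def)
qed

lemma sqrt_one_plus_abs_le_two_abs_nn:
  assumes "x \<le> 1" shows "sqrt (1 + \<bar>x\<bar>) - 1 \<le> 2 * \<bar>nn x\<bar>"
proof (cases "x \<le> 0")
  case True
  then show ?thesis by (simp add: two_abs_nn_of_nonpos)
next
  case False
  define a b where "a = sqrt (1 + x)" and "b = sqrt (1 - x)"
  have "(a + b)^2 + (a - b)^2 = 2 * (a^2 + b^2)" by algebra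
  also have "\<dots> = 4" using assms False by (simp add: a_def b_def)
  moreover have "0 \<le> (a - b)^2" by simp
  ultimately have "(a + b)^2 \<le> 4" by linarith
  then have "a + b \<le> 2" using power2_le_imp_le[of "a + b" 2] by simp
  moreover have "b \<le> 1" using False by (simp add: b_def)
  ultimately show ?thesis using False by (simp add: nn_def a_def b_def)
qed

lemma sqrt_one_plus_add_le:
  fixes x y :: real
  assumes "0 \<le> x" "0 \<le> y"
  shows "sqrt (1 + (x + y)) \<le> sqrt (1 + x) + sqrt (1 + y) - 1"
proof -
  define a b where "a = sqrt (1 + x)" and "b = sqrt (1 + y)"
  have "1 \<le> a" "1 \<le> b" using assms by (simp_all add: a_def b_def)
  have "1 + (x + y) = a^2 + b^2 - 1" using assms by (simp add: a_def b_def)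
  also have "\<dots> \<le> (a + b - 1)^2"
    using mult_nonneg_nonneg[of "a - 1" "b - 1"] \<open>1 \<le> a\<close> \<open>1 \<le> b\<close>
    by (simp add: power2_eq_square algebra_simps)
  finally show ?thesis
    unfolding a_def[symmetric] b_def[symmetric] using \<open>1 \<le> a\<close> \<open>1 \<le> b\<close>
    by (simp add: real_sqrt_le_iff real_le_lsqrt)
qed

lemma abs_nn_triangle_of_nonpos:
  assumes "x1 \<le> 0" "x2 \<le> 1" "x3 \<le> 1" "\<bar>x1\<bar> \<le> \<bar>x2\<bar> + \<bar>x3\<bar>"
  shows "\<bar>nn x1\<bar> \<le> \<bar>nn x2\<bar> + \<bar>nn x3\<bar>"
proof -
  have "2 * \<bar>nn x1\<bar> = sqrt (1 + \<bar>x1\<bar>) - 1" using assms(1) by (rule two_abs_nn_of_nonpos)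
  also have "\<dots> \<le> sqrt (1 + (\<bar>x2\<bar> + \<bar>x3\<bar>)) - 1" using assms(4) by simp
  also have "\<dots> \<le> (sqrt (1 + \<bar>x2\<bar>) - 1) + (sqrt (1 + \<bar>x3\<bar>) - 1)"
    using sqrt_one_plus_add_le[of "\<bar>x2\<bar>" "\<bar>x3\<bar>"] by simp
  also have "\<dots> \<le> 2 * \<bar>nn x2\<bar> + 2 * \<bar>nn x3\<bar>"
    using assms(2,3) by (intro add_mono sqrt_one_plus_abs_le_two_abs_nn)
  finally show ?thesis by simp
qed

lemma abs_nn_mult_triangle_of_nonneg:
  assumes w: "0 \<le> w1" "w1 \<le> 1" "w2 \<le> 1" "w3 \<le> 1"
    and n: "\<bar>nn w2\<bar> \<le> 1/2" "\<bar>nn w3\<bar> \<le> 1/2" "\<bar>nn w1\<bar> \<le> \<bar>nn w2\<bar> + \<bar>nn w3\<bar>"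
    and s: "0 \<le> s" "s \<le> 1"
  shows "\<bar>nn (w1 * s)\<bar> \<le> \<bar>nn (w2 * s)\<bar> + \<bar>nn (w3 * s)\<bar>"
proof -
  have "0 \<le> nn (w1 * s)" using nn_mono[of 0 "w1 * s"] w s by simp
  then have "\<bar>nn (w1 * s)\<bar> = nn_rescaled s \<bar>nn w1\<bar>"
    using nn_mono[of 0 w1] w by (simp add: nn_mult_eq_nn_rescaled)
  also have "\<dots> \<le> nn_rescaled s \<bar>nn w2\<bar> + nn_rescaled s \<bar>nn w3\<bar>"
    using n s by (intro nn_rescaled_triangle) auto
  also have "\<dots> \<le> \<bar>nn_rescaled s (nn w2)\<bar> + \<bar>nn_rescaled s (nn w3)\<bar>"
    using s by (intro add_mono nn_rescaled_abs_le)
  also have "\<dots> = \<bar>nn (w2 * s)\<bar> + \<bar>nn (w3 * s)\<bar>"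
    using w by (simp add: nn_mult_eq_nn_rescaled)
  finally show ?thesis .
qed

lemma abs_nn_mult_triangle:
  assumes w: "w1 \<le> 1" "w2 \<le> 1" "w3 \<le> 1" "\<bar>w1\<bar> \<le> \<bar>w2\<bar> + \<bar>w3\<bar>"
    and n: "\<bar>nn w2\<bar> \<le> 1/2" "\<bar>nn w3\<bar> \<le> 1/2" "\<bar>nn w1\<bar> \<le> \<bar>nn w2\<bar> + \<bar>nn w3\<bar>"
    and s: "0 \<le> s" "s \<le> 1"
  shows "\<bar>nn (w1 * s)\<bar> \<le> \<bar>nn (w2 * s)\<bar> + \<bar>nn (w3 * s)\<bar>"
proof (cases "0 \<le> w1")
  case True
  then show ?thesis using w n s by (intro abs_nn_mult_triangle_of_nonneg)
next
  case False
  have "\<bar>w1 * s\<bar> \<le> \<bar>w2 * s\<bar> + \<bar>w3 * s\<bar>"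
    using mult_right_mono[OF w(4) s(1)] s by (simp add: abs_mult distrib_right)
  moreover have "w1 * s \<le> 0" using False s by (simp add: mult_nonpos_nonneg)
  ultimately show ?thesis using w s by (intro abs_nn_triangle_of_nonpos mult_le_one)
qed

lemma nu_path_in_T_if_conditions:
  assumes w: "w1 \<le> 1" "w2 \<le> 1" "w3 \<le> 1"
    and n: "(\<bar>nn w1\<bar>, \<bar>nn w2\<bar>, \<bar>nn w3\<bar>) \<in> T0"
    and tw: "\<bar>w1\<bar> \<le> \<bar>w2\<bar> + \<bar>w3\<bar>" "\<bar>w2\<bar> \<le> \<bar>w1\<bar> + \<bar>w3\<bar>" "\<bar>w3\<bar> \<le> \<bar>w1\<bar> + \<bar>w2\<bar>"
  shows "nu_path_in_T w1 w2 w3"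
  unfolding nu_path_in_T_def
proof
  fix s :: real assume "s \<in> {0..1}"
  then have s: "0 \<le> s" "s \<le> 1" by auto
  have tn: "\<bar>nn w1\<bar> \<le> \<bar>nn w2\<bar> + \<bar>nn w3\<bar>" "\<bar>nn w2\<bar> \<le> \<bar>nn w1\<bar> + \<bar>nn w3\<bar>"
    "\<bar>nn w3\<bar> \<le> \<bar>nn w1\<bar> + \<bar>nn w2\<bar>" "\<bar>nn w1\<bar> + \<bar>nn w2\<bar> + \<bar>nn w3\<bar> \<le> 1"
    using n by (auto simp: T0_def)
  then have half: "\<bar>nn w1\<bar> \<le> 1/2" "\<bar>nn w2\<bar> \<le> 1/2" "\<bar>nn w3\<bar> \<le> 1/2" by linarith+
  have "\<bar>nn (w1 * s)\<bar> \<le> \<bar>nn w1\<bar>" "\<bar>nn (w2 * s)\<bar> \<le> \<bar>nn w2\<bar>" "\<bar>nn (w3 * s)\<bar> \<le> \<bar>nn w3\<bar>"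
    using w s by (simp_all add: abs_nn_mult_le)
  moreover have "\<bar>nn (w1 * s)\<bar> \<le> \<bar>nn (w2 * s)\<bar> + \<bar>nn (w3 * s)\<bar>"
    "\<bar>nn (w2 * s)\<bar> \<le> \<bar>nn (w1 * s)\<bar> + \<bar>nn (w3 * s)\<bar>"
    "\<bar>nn (w3 * s)\<bar> \<le> \<bar>nn (w1 * s)\<bar> + \<bar>nn (w2 * s)\<bar>"
    using w tw tn half s by (auto intro: abs_nn_mult_triangle)
  ultimately have "(\<bar>nn (w1 * s)\<bar>, \<bar>nn (w2 * s)\<bar>, \<bar>nn (w3 * s)\<bar>) \<in> T0"
    "\<bar>nn (w1 * s)\<bar> \<le> 1/2" "\<bar>nn (w2 * s)\<bar> \<le> 1/2" "\<bar>nn (w3 * s)\<bar> \<le> 1/2"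
    using tn half by (auto simp: T0_def)
  then show "(nn (w1 * s), nn (w2 * s), nn (w3 * s)) \<in> T"
    by (simp add: mem_T_iff_abs_mem_T0)
qed

lemma eventually_at_right_0_le_1: "eventually (\<lambda>s::real. 0 < s \<and> s \<le> 1) (at_right 0)"
  unfolding eventually_at_right_field by (intro exI[of _ 1]) auto

lemma abs_nn_mult_div_tendsto:
  assumes "w \<le> 1"
  shows "((\<lambda>s. \<bar>nn (w * s)\<bar> / s) \<longlongrightarrow> \<bar>w\<bar> / 4) (at_right 0)"
proof -
  have "((\<lambda>s. \<bar>w\<bar> / (2 * (1 + sqrt (1 - w * s))))
      \<longlongrightarrow> \<bar>w\<bar> / (2 * (1 + sqrt (1 - w * 0)))) (at_right 0)"
    by (intro tendsto_intros) auto
  then have "((\<lambda>s. \<bar>w\<bar> / (2 * (1 + sqrt (1 - w * s)))) \<longlongrightarrow> \<bar>w\<bar> / 4) (at_right 0)" by simp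
  moreover have
    "eventually (\<lambda>s. \<bar>w\<bar> / (2 * (1 + sqrt (1 - w * s))) = \<bar>nn (w * s)\<bar> / s) (at_right 0)"
    using eventually_at_right_0_le_1
  proof eventually_elim
    case (elim s)
    then have "w * s \<le> 1" using assms by (intro mult_le_one) auto
    then have "0 < 2 * (1 + sqrt (1 - w * s))" by (simp add: add_pos_nonneg)
    then show ?case using elim \<open>w * s \<le> 1\<close> by (simp add: nn_eq_div abs_mult)
  qed
  ultimately show ?thesis by (rule Lim_transform_eventually)
qed

lemma abs_le_add_of_nu_path_in_T:
  assumes w: "w1 \<le> 1" "w2 \<le> 1" "w3 \<le> 1" and P: "nu_path_in_T w1 w2 w3"
  shows "\<bar>w1\<bar> \<le> \<bar>w2\<bar> + \<bar>w3\<bar>"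
proof -
  have small: "eventually (\<lambda>s. \<bar>nn (w * s)\<bar> \<le> 1/2) (at_right 0)" if "w \<le> 1" for w
  proof -
    have "((\<lambda>s. w * s) \<longlongrightarrow> 0) (at_right 0)" by (intro tendsto_eq_intros) auto
    then have "eventually (\<lambda>s. -3 < w * s) (at_right 0)" by (rule order_tendstoD) simp
    with eventually_at_right_0_le_1 show ?thesis
    proof eventually_elim
      case (elim s)
      then show ?case using that by (intro abs_nn_le_half mult_le_one) auto
    qed
  qed
  have ev: "eventually (\<lambda>s. \<bar>nn (w1 * s)\<bar> / s \<le> \<bar>nn (w2 * s)\<bar> / s + \<bar>nn (w3 * s)\<bar> / s)
      (at_right 0)"
    using eventually_at_right_0_le_1 small[OF w(1)] small[OF w(2)] small[OF w(3)]
  proof eventually_elim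
    case (elim s)
    then have "(nn (w1 * s), nn (w2 * s), nn (w3 * s)) \<in> T"
      using P by (simp add: nu_path_in_T_def)
    then have "\<bar>nn (w1 * s)\<bar> \<le> \<bar>nn (w2 * s)\<bar> + \<bar>nn (w3 * s)\<bar>"
      using elim by (simp add: mem_T_iff_abs_mem_T0 T0_def)
    then show ?case using elim by (simp add: divide_right_mono flip: add_divide_distrib)
  qed
  have lim: "((\<lambda>s. \<bar>nn (w2 * s)\<bar> / s + \<bar>nn (w3 * s)\<bar> / s)
      \<longlongrightarrow> \<bar>w2\<bar> / 4 + \<bar>w3\<bar> / 4) (at_right 0)"
    using w by (intro tendsto_add abs_nn_mult_div_tendsto)
  have "\<bar>w1\<bar> / 4 \<le> \<bar>w2\<bar> / 4 + \<bar>w3\<bar> / 4"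
    by (rule tendsto_le[OF trivial_limit_at_right_real lim abs_nn_mult_div_tendsto[OF w(1)] ev])
  then show ?thesis by simp
qed

lemma abs_le_four_abs_nn: assumes "x \<le> 1" shows "\<bar>x\<bar> \<le> 4 * \<bar>nn x\<bar> * (1 + \<bar>nn x\<bar>)"
proof -
  have "\<bar>x\<bar> = 4 * \<bar>nn x\<bar> * \<bar>1 - nn x\<bar>"
    using eq_four_nn_mult[OF assms] by (metis abs_mult abs_numeral)
  also have "\<dots> \<le> 4 * \<bar>nn x\<bar> * (1 + \<bar>nn x\<bar>)" by (intro mult_left_mono) auto
  finally show ?thesis .
qed

lemma abs_add_lt_3_of_nn_mem_T:
  assumes x: "-3 \<le> x2" "x2 \<le> 1" "x2 \<noteq> 0" "-3 \<le> x3" "x3 \<le> 1" "x3 \<noteq> 0"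
    and mem: "(-1/2, nn x2, nn x3) \<in> T"
  shows "\<bar>x2\<bar> + \<bar>x3\<bar> < 3"
proof -
  define h2 h3 where "h2 = \<bar>nn x2\<bar>" and "h3 = \<bar>nn x3\<bar>"
  have h: "0 < h2" "h2 \<le> 1/2" "0 < h3" "h3 \<le> 1/2"
    using x abs_nn_le_half[of x2] abs_nn_le_half[of x3] by (simp_all add: h2_def h3_def nn_eq_0_iff)
  then have "(1/2, h2, h3) \<in> T0"
    using mem by (simp add: mem_T_iff_abs_mem_T0 h2_def h3_def)
  then have sum: "h2 + h3 = 1/2" by (simp add: T0_def)
  have "\<bar>x2\<bar> + \<bar>x3\<bar> \<le> 4 * h2 * (1 + h2) + 4 * h3 * (1 + h3)"
    using x by (simp add: h2_def h3_def add_mono abs_le_four_abs_nn)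
  also have "\<dots> = 4 * (h2 + h3) + 4 * (h2 + h3)^2 - 8 * h2 * h3"
    by (simp add: power2_eq_square algebra_simps)
  also have "\<dots> = 3 - 8 * h2 * h3" by (simp add: sum power2_eq_square)
  also have "\<dots> < 3" using h by simp
  finally show ?thesis .
qed

lemma neg3_le_of_nu_path_in_T:
  assumes w: "w1 \<le> w2" "w1 \<le> w3" "w2 \<le> 1" "w3 \<le> 1" "w2 \<noteq> 0" "w3 \<noteq> 0"
    and P: "nu_path_in_T w1 w2 w3"
  shows "-3 \<le> w1"
proof (rule ccontr)
  assume "\<not> -3 \<le> w1"
  define s where "s = -3 / w1"
  have s: "0 < s" "s < 1" and w1s: "w1 * s = -3"
    using \<open>\<not> -3 \<le> w1\<close> by (auto simp: s_def field_simps)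
  have x: "-3 \<le> w * s" "w * s \<le> 1" "w * s \<noteq> 0" if "w1 \<le> w" "w \<le> 1" "w \<noteq> 0" for w
    using that s mult_right_mono[of w1 w s] w1s by (auto intro: mult_le_one)
  have "(nn (w1 * s), nn (w2 * s), nn (w3 * s)) \<in> T"
    using P s by (simp add: nu_path_in_T_def)
  then have "(-1/2, nn (w2 * s), nn (w3 * s)) \<in> T" by (simp add: w1s nn_def)
  then have "\<bar>w2 * s\<bar> + \<bar>w3 * s\<bar> < 3"
    using x[of w2] x[of w3] w by (intro abs_add_lt_3_of_nn_mem_T) auto
  moreover have "\<bar>w1\<bar> \<le> \<bar>w2\<bar> + \<bar>w3\<bar>" using w P by (intro abs_le_add_of_nu_path_in_T) auto
  then have "\<bar>w1 * s\<bar> \<le> \<bar>w2 * s\<bar> + \<bar>w3 * s\<bar>"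
    using mult_right_mono[of "\<bar>w1\<bar>" "\<bar>w2\<bar> + \<bar>w3\<bar>" s] s by (simp add: abs_mult distrib_right)
  ultimately show False using w1s by simp
qed

lemma abs_nn_mem_T0_of_nu_path_in_T:
  assumes w: "w1 \<le> 1" "w2 \<le> 1" "w3 \<le> 1" "w1 \<noteq> 0" "w2 \<noteq> 0" "w3 \<noteq> 0"
    and P: "nu_path_in_T w1 w2 w3"
  shows "(\<bar>nn w1\<bar>, \<bar>nn w2\<bar>, \<bar>nn w3\<bar>) \<in> T0"
proof -
  have "-3 \<le> min w1 (min w2 w3)"
  proof -
    consider "w1 \<le> w2" "w1 \<le> w3" | "w2 \<le> w1" "w2 \<le> w3" | "w3 \<le> w1" "w3 \<le> w2" by linarith
    then show ?thesis
    proof cases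
      case 1
      with w P show ?thesis using neg3_le_of_nu_path_in_T[of w1 w2 w3] by simp
    next
      case 2
      with w P show ?thesis
        using neg3_le_of_nu_path_in_T[of w2 w1 w3] nu_path_in_T_swap12 by simp
    next
      case 3
      with w P show ?thesis
        using neg3_le_of_nu_path_in_T[of w3 w1 w2] nu_path_in_T_rotate by simp
    qed
  qed
  then have "\<bar>nn w1\<bar> \<le> 1/2" "\<bar>nn w2\<bar> \<le> 1/2" "\<bar>nn w3\<bar> \<le> 1/2"
    using w abs_nn_le_half by auto
  moreover have "(nn w1, nn w2, nn w3) \<in> T"
    using P[unfolded nu_path_in_T_def, rule_format, of 1] by simp
  ultimately show ?thesis by (simp add: mem_T_iff_abs_mem_T0)
qed

theorem mainTheorem6:
  fixes w1 w2 w3 :: real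
  assumes "w1 < 1" "w2 < 1" "w3 < 1" "w1 \<noteq> 0" "w2 \<noteq> 0" "w3 \<noteq> 0"
  shows "(\<forall>l::complex. norm l = 1 \<longrightarrow> (nu w1 l, nu w2 l, nu w3 l) \<in> embC ` T)
    \<longleftrightarrow> (\<bar>nn w1\<bar> + \<bar>nn w2\<bar> + \<bar>nn w3\<bar> \<le> 1
         \<and> \<bar>nn w1\<bar> \<le> \<bar>nn w2\<bar> + \<bar>nn w3\<bar>
         \<and> \<bar>nn w2\<bar> \<le> \<bar>nn w1\<bar> + \<bar>nn w3\<bar>
         \<and> \<bar>nn w3\<bar> \<le> \<bar>nn w1\<bar> + \<bar>nn w2\<bar>
         \<and> \<bar>w1\<bar> \<le> \<bar>w2\<bar> + \<bar>w3\<bar>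
         \<and> \<bar>w2\<bar> \<le> \<bar>w1\<bar> + \<bar>w3\<bar>
         \<and> \<bar>w3\<bar> \<le> \<bar>w1\<bar> + \<bar>w2\<bar>)"
    (is "_ \<longleftrightarrow> ?R")
proof -
  have w: "w1 \<le> 1" "w2 \<le> 1" "w3 \<le> 1" using assms by simp_all
  have "nu_path_in_T w1 w2 w3 \<longleftrightarrow> ?R"
  proof
    assume P: "nu_path_in_T w1 w2 w3"
    have "\<bar>w1\<bar> \<le> \<bar>w2\<bar> + \<bar>w3\<bar>" using w P by (rule abs_le_add_of_nu_path_in_T)
    moreover have "\<bar>w2\<bar> \<le> \<bar>w1\<bar> + \<bar>w3\<bar>"
      using w nu_path_in_T_swap12[OF P] by (intro abs_le_add_of_nu_path_in_T)
    moreover have "\<bar>w3\<bar> \<le> \<bar>w1\<bar> + \<bar>w2\<bar>"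
      using w nu_path_in_T_rotate[OF P] by (intro abs_le_add_of_nu_path_in_T)
    moreover have "(\<bar>nn w1\<bar>, \<bar>nn w2\<bar>, \<bar>nn w3\<bar>) \<in> T0"
      using w assms(4-6) P by (rule abs_nn_mem_T0_of_nu_path_in_T)
    ultimately show ?R by (simp add: T0_def)
  next
    assume ?R
    then show "nu_path_in_T w1 w2 w3"
      using w by (intro nu_path_in_T_if_conditions) (auto simp: T0_def)
  qed
  with nu_circle_in_T_iff_nu_path_in_T[OF w] show ?thesis by simp
qed

end
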